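(* Let $(V,\|\cdot\|_V)$, $(\mathcal V,\|\cdot\|_{\mathcal V})$, $(W,\|\cdot\|_W)$, $(\mathcal W,\|\cdot\|_{\mathcal W})$ be normed real vector spaces with $V\subseteq\mathcal V$ continuously and $W\subseteq\mathcal W$ continuously, and let $\epsilon,\theta\in[0,\infty)$, $\varepsilon,\vartheta\in(0,\infty)$ and $F\colon V\to W$ satisfy for all $v,w\in V$ that $\|F(v)-F(w)\|_W\le\epsilon(1+\|v\|_{\mathcal V}^\varepsilon+\|w\|_{\mathcal V}^\varepsilon)\|v-w\|_{\mathcal V}$, $\vartheta=2\varepsilon$, and $$\theta=\max\Big\{3\epsilon^2\Big[\sup_{u\in W\setminus\{0\}}\tfrac{\|u\|_{\mathcal W}^2}{\|u\|_W^2}\Big]\Big[1+\sup_{u\in V\setminus\{0\}}\tfrac{\|u\|_{\mathcal V}^{2\varepsilon}}{\|u\|_V^{2\varepsilon}}\Big](1+2^{\max\{2\varepsilon-1,0\}}),\ (8\epsilon^2+2\|F(0)\|_W^2)\max\Big\{1,\sup_{u\in V\setminus\{0\}}\tfrac{\|u\|_{\mathcal V}^{2+2\varepsilon}}{\|u\|_V^{2+2\varepsilon}}\Big\}\Big\}.$$ Then for all $v,w\in V$ it holds that $\|F(v)\|_W^2\le\theta\max\{1,\|v\|_V^{2+\vartheta}\}$ and $$\|F(v)-F(w)\|_{\mathcal W}^2\le\theta\max\{1,\|v\|_V^\vartheta\}\|v-w\|_{\mathcal V}^2+\theta\|v-w\|_{\mathcal V}^{2+\vartheta}.$$ *)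

theory Defs
  imports "HOL-Analysis.Analysis"
begin

text \<open>For a continuous embedding i of a normed space V into another normed space,
  emb_sup i p = sup over u in V with u nonzero of (norm (i u)) powr p / (norm u) powr p.
  The value 0 is adjoined so that the supremum over an empty index set
  (trivial space V) is 0; all ratios are nonnegative, so otherwise this is
  the ordinary supremum.\<close>
definition emb_sup :: "('a::real_normed_vector \<Rightarrow> 'b::real_normed_vector) \<Rightarrow> real \<Rightarrow> real" where
  "emb_sup i p = Sup (insert 0 {norm (i u) powr p / norm u powr p | u. u \<noteq> 0})"

end

theory Submission
  imports Defs
begin

text \<open>Write a = norm (iV v), d = norm (iV (v - w)) and b = norm (iV w) \<le> a + d.
  Growth: the Lipschitz bound against w = 0 gives norm (F v) \<le> norm (F 0) + eps (a + a^(1+epsl)),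
  and after squaring both a^2 and a^(2+2 epsl) are dominated by max 1 (a^(2+2 epsl)), which the
  embedding constant transfers to the norm of V.
  Increments: squaring the Lipschitz bound gives (1 + a^epsl + b^epsl)^2 \<le> 3 (1 + a^(2 epsl) + b^(2 epsl)),
  and b^(2 epsl) \<le> (a + d)^(2 epsl) \<le> 2^max(2 epsl - 1, 0) (a^(2 epsl) + d^(2 epsl)) splits the
  contribution of w into one of v and one of the increment.\<close>

lemma powr_add_le_add_powr:
  fixes a d p :: real
  assumes "a \<ge> 0" "d \<ge> 0" "0 < p" "p \<le> 1"
  shows "(a + d) powr p \<le> a powr p + d powr p"
proof (cases "a + d = 0")
  case True
  then show ?thesis using assms by simp
next
  case False
  then have s: "a + d > 0" using assms by simp
  have frac_le: "x / (a + d) \<le> (x / (a + d)) powr p" if "0 \<le> x" "x \<le> a + d" for x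
  proof (cases "x = 0")
    case False
    then show ?thesis
      using powr_mono'[of p 1 "x / (a + d)"] that s assms by simp
  qed simp
  \<comment> \<open>the fractions a/(a+d) and d/(a+d) lie in [0,1] and sum to 1\<close>
  have "1 = a / (a + d) + d / (a + d)"
    using s by (simp add: add_divide_distrib[symmetric])
  also have "\<dots> \<le> (a / (a + d)) powr p + (d / (a + d)) powr p"
    using assms by (intro add_mono frac_le) auto
  also have "\<dots> = (a powr p + d powr p) / (a + d) powr p"
    using assms s by (simp add: powr_divide add_divide_distrib)
  finally show ?thesis using s by simp
qed

lemma powr_add_le_convex:
  fixes a d p :: real
  assumes "a \<ge> 0" "d \<ge> 0" "1 \<le> p"
  shows "(a + d) powr p \<le> 2 powr (p - 1) * (a powr p + d powr p)"
proof -
  have two: "1 \<le> 2 powr (p - 1)" using assms by (intro ge_one_powr_ge_zero) auto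
  consider "a = 0" | "d = 0" | "a > 0" "d > 0" using assms by linarith
  then show ?thesis
  proof cases
    case 1
    then show ?thesis using mult_right_mono[OF two, of "d powr p"] by simp
  next
    case 2
    then show ?thesis using mult_right_mono[OF two, of "a powr p"] by simp
  next
    case 3
    have "convex_on {0<..} (\<lambda>x. x powr p)" using powr_convex assms by blast
    then have "((1/2) * a + (1/2) * d) powr p \<le> (1/2) * a powr p + (1/2) * d powr p"
      using convex_onD[of "{0<..}" _ "1/2" a d] 3 by simp
    then have "(a + d) powr p / 2 powr p \<le> (a powr p + d powr p) / 2"
      using 3 by (simp add: powr_divide field_simps)
    moreover have "2 powr p = 2 * 2 powr (p - 1)" by (simp add: powr_diff)
    ultimately show ?thesis by (simp add: field_simps)
  qed
qed

lemma powr_add_le: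
  fixes a d p :: real
  assumes "a \<ge> 0" "d \<ge> 0" "0 < p"
  shows "(a + d) powr p \<le> 2 powr (max (p - 1) 0) * (a powr p + d powr p)"
proof (cases "p \<le> 1")
  case True
  then show ?thesis using powr_add_le_add_powr[OF assms] by simp
next
  case False
  then show ?thesis using powr_add_le_convex[of a d p] assms by simp
qed

lemma square_le_max_one_powr:
  fixes x q :: real
  assumes "x \<ge> 0" "2 \<le> q"
  shows "x\<^sup>2 \<le> max 1 (x powr q)"
proof (cases "x \<le> 1")
  case True
  then have "x\<^sup>2 \<le> 1" using assms by (simp add: power_le_one)
  then show ?thesis by simp
next
  case False
  then have "x\<^sup>2 = x powr 2" by (simp add: powr_numeral)
  also have "\<dots> \<le> x powr q" using False assms by (intro powr_mono) auto
  finally show ?thesis by simp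
qed

lemma square_sum3_le:
  fixes x y z :: real
  shows "(x + y + z)\<^sup>2 \<le> 3 * (x\<^sup>2 + y\<^sup>2 + z\<^sup>2)"
proof -
  have "0 \<le> (x - y)\<^sup>2 + (y - z)\<^sup>2 + (x - z)\<^sup>2" by simp
  then show ?thesis by (simp add: power2_eq_square algebra_simps)
qed

lemma square_le_of_le_affine_powr:
  fixes x c eps epsl a :: real
  assumes "0 \<le> x" "x \<le> c + eps * (1 + a powr epsl) * a" "c \<ge> 0" "a \<ge> 0" "epsl > 0"
  shows "x\<^sup>2 \<le> (8 * eps\<^sup>2 + 2 * c\<^sup>2) * max 1 (a powr (2 + 2 * epsl))"
proof -
  define y where "y = a powr (1 + epsl)"
  define m where "m = max 1 (a powr (2 + 2 * epsl))"
  have "eps * (1 + a powr epsl) * a = eps * (a + y)"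
    using assms by (simp add: y_def powr_add algebra_simps)
  then have "x \<le> c + eps * (a + y)" using assms(2) by linarith
  then have "x\<^sup>2 \<le> (c + eps * (a + y))\<^sup>2"
    using assms(1) by (intro power_mono)
  also have "\<dots> \<le> 2 * c\<^sup>2 + 2 * eps\<^sup>2 * (a + y)\<^sup>2"
    using sum_squares_bound[of c "eps * (a + y)"] by (simp add: power2_sum power_mult_distrib)
  also have "\<dots> \<le> 2 * c\<^sup>2 + 2 * eps\<^sup>2 * (2 * m + 2 * m)"
  proof -
    have "(a + y)\<^sup>2 \<le> 2 * a\<^sup>2 + 2 * y\<^sup>2"
      using sum_squares_bound[of a y] by (simp add: power2_sum)
    moreover have "a\<^sup>2 \<le> m" unfolding m_def using assms by (intro square_le_max_one_powr) auto
    moreover have "y\<^sup>2 = a powr (2 + 2 * epsl)"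
      unfolding y_def power2_eq_square powr_add[symmetric] by (simp add: algebra_simps)
    then have "y\<^sup>2 \<le> m" by (simp add: m_def)
    ultimately show ?thesis by (intro add_left_mono mult_left_mono) auto
  qed
  also have "\<dots> \<le> (8 * eps\<^sup>2 + 2 * c\<^sup>2) * m"
    using mult_left_mono[of 1 m "2 * c\<^sup>2"] by (simp add: m_def algebra_simps)
  finally show ?thesis by (simp add: m_def)
qed

lemma one_add_powr_sum_square_le:
  fixes a b d epsl :: real
  assumes "a \<ge> 0" "b \<ge> 0" "d \<ge> 0" "b \<le> a + d" "epsl > 0"
  shows "(1 + a powr epsl + b powr epsl)\<^sup>2
    \<le> 3 * (1 + 2 powr (max (2 * epsl - 1) 0)) * (1 + a powr (2 * epsl) + d powr (2 * epsl))"
proof -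
  define c where "c = 2 powr (max (2 * epsl - 1) 0)"
  have "c \<ge> 0" by (simp add: c_def)
  have sq: "(r powr epsl)\<^sup>2 = r powr (2 * epsl)" for r :: real
    by (simp add: power2_eq_square powr_add[symmetric])
  have "b powr (2 * epsl) \<le> (a + d) powr (2 * epsl)"
    using assms by (intro powr_mono2) auto
  also have "\<dots> \<le> c * (a powr (2 * epsl) + d powr (2 * epsl))"
    unfolding c_def using assms by (intro powr_add_le) auto
  finally have b_le: "b powr (2 * epsl) \<le> c * (a powr (2 * epsl) + d powr (2 * epsl))" .
  have "(1 + a powr epsl + b powr epsl)\<^sup>2 \<le> 3 * (1 + a powr (2 * epsl) + b powr (2 * epsl))"
    using square_sum3_le[of 1 "a powr epsl" "b powr epsl"] by (simp add: sq)
  also have "\<dots> \<le> 3 * (1 + c) * (1 + a powr (2 * epsl) + d powr (2 * epsl))"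
  proof -
    have "1 + x + y \<le> (1 + c) * (1 + x + z)" if "y \<le> c * (x + z)" "0 \<le> z" for x y z :: real
      using that \<open>c \<ge> 0\<close> by (simp add: algebra_simps)
    from this[OF b_le powr_ge_zero] show ?thesis by (simp only: mult.assoc mult_le_cancel_left_pos)
  qed
  finally show ?thesis by (simp add: c_def)
qed

lemma bdd_above_emb_ratios:
  assumes "bounded_linear i" "p > 0"
  shows "bdd_above (insert 0 {norm (i u) powr p / norm u powr p | u. u \<noteq> 0})"
proof -
  obtain K where K: "K > 0" "\<And>x. norm (i x) \<le> norm x * K"
    using bounded_linear.pos_bounded[OF assms(1)] by blast
  have "norm (i u) powr p / norm u powr p \<le> K powr p" if "u \<noteq> 0" for u
  proof -
    have "norm (i u) / norm u \<le> K"
      using K(2)[of u] that by (simp add: divide_le_eq mult.commute)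
    then have "(norm (i u) / norm u) powr p \<le> K powr p" using assms by (intro powr_mono2) auto
    then show ?thesis by (simp add: powr_divide)
  qed
  then show ?thesis by (intro bdd_aboveI[where M = "K powr p"]) auto
qed

lemma emb_sup_nonneg:
  assumes "bounded_linear i" "p > 0"
  shows "emb_sup i p \<ge> 0"
  unfolding emb_sup_def using bdd_above_emb_ratios[OF assms] by (intro cSup_upper) auto

lemma norm_powr_le_emb_sup:
  assumes "bounded_linear i" "p > 0"
  shows "norm (i u) powr p \<le> emb_sup i p * norm u powr p"
proof (cases "u = 0")
  case True
  then show ?thesis using assms linear_simps(3)[OF assms(1)] by simp
next
  case False
  have "norm (i u) powr p / norm u powr p \<le> emb_sup i p"
    unfolding emb_sup_def using bdd_above_emb_ratios[OF assms] False by (intro cSup_upper) auto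
  then show ?thesis using False by (simp add: divide_le_eq)
qed

lemma max_one_norm_powr_le_emb_sup:
  assumes "bounded_linear i" "p > 0"
  shows "max 1 (norm (i u) powr p) \<le> max 1 (emb_sup i p) * max 1 (norm u powr p)"
proof -
  have "norm (i u) powr p \<le> max 1 (emb_sup i p) * max 1 (norm u powr p)"
    using norm_powr_le_emb_sup[OF assms, of u] by (rule order_trans) (intro mult_mono; simp)
  moreover have "1 \<le> max 1 (emb_sup i p) * max 1 (norm u powr p)"
    using mult_mono[of 1 "max 1 (emb_sup i p)" 1 "max 1 (norm u powr p)"] by simp
  ultimately show ?thesis by simp
qed

lemma norm_square_le_of_local_lipschitz:
  fixes iV :: "'v::real_normed_vector \<Rightarrow> 'vv::real_normed_vector" and F :: "'v \<Rightarrow> 'w::real_normed_vector"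
  assumes "bounded_linear iV" "epsl > 0"
    and "norm (F v - F 0) \<le> eps * (1 + norm (iV v) powr epsl) * norm (iV v)"
  shows "(norm (F v))\<^sup>2 \<le> (8 * eps\<^sup>2 + 2 * (norm (F 0))\<^sup>2) * max 1 (emb_sup iV (2 + 2 * epsl))
    * max 1 (norm v powr (2 + 2 * epsl))"
proof -
  have "norm (F v) \<le> norm (F 0) + eps * (1 + norm (iV v) powr epsl) * norm (iV v)"
    using assms(3) norm_triangle_ineq2[of "F v" "F 0"] by linarith
  then have "(norm (F v))\<^sup>2
      \<le> (8 * eps\<^sup>2 + 2 * (norm (F 0))\<^sup>2) * max 1 (norm (iV v) powr (2 + 2 * epsl))"
    using assms(2) by (intro square_le_of_le_affine_powr) auto
  also have "\<dots> \<le> (8 * eps\<^sup>2 + 2 * (norm (F 0))\<^sup>2)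
      * (max 1 (emb_sup iV (2 + 2 * epsl)) * max 1 (norm v powr (2 + 2 * epsl)))"
    using assms by (intro mult_left_mono max_one_norm_powr_le_emb_sup) auto
  finally show ?thesis by (simp add: mult.assoc)
qed

lemma norm_emb_diff_square_le_of_local_lipschitz:
  fixes iV :: "'v::real_normed_vector \<Rightarrow> 'vv::real_normed_vector"
    and iW :: "'w::real_normed_vector \<Rightarrow> 'ww::real_normed_vector" and F :: "'v \<Rightarrow> 'w"
  assumes "bounded_linear iV" "bounded_linear iW" "epsl > 0"
    and "norm (F v - F w)
      \<le> eps * (1 + norm (iV v) powr epsl + norm (iV w) powr epsl) * norm (iV (v - w))"
  defines "K \<equiv> 3 * eps\<^sup>2 * emb_sup iW 2 * (1 + emb_sup iV (2 * epsl))
      * (1 + 2 powr (max (2 * epsl - 1) 0))"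
  shows "(norm (iW (F v - F w)))\<^sup>2
    \<le> K * max 1 (norm v powr (2 * epsl)) * (norm (iV (v - w)))\<^sup>2
      + K * norm (iV (v - w)) powr (2 + 2 * epsl)"
proof -
  define a b d where "a = norm (iV v)" and "b = norm (iV w)" and "d = norm (iV (v - w))"
  define cV cW c where "cV = emb_sup iV (2 * epsl)" and "cW = emb_sup iW 2"
    and "c = 2 powr (max (2 * epsl - 1) 0)"
  define N D where "N = max 1 (norm v powr (2 * epsl))" and "D = d powr (2 * epsl)"
  have nonneg: "cV \<ge> 0" "cW \<ge> 0" "c \<ge> 0" "D \<ge> 0"
    using assms by (auto simp: cV_def cW_def c_def D_def intro!: emb_sup_nonneg)
  have "b \<le> a + d"
    using norm_triangle_ineq4[of "iV v" "iV (v - w)"]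
    by (simp add: a_def b_def d_def linear_simps(2)[OF assms(1)])
  then have lip_factor: "(1 + a powr epsl + b powr epsl)\<^sup>2 \<le> 3 * (1 + c) * (1 + a powr (2 * epsl) + D)"
    unfolding c_def D_def using assms(3) by (intro one_add_powr_sum_square_le) (auto simp: a_def b_def d_def)
  have "a powr (2 * epsl) \<le> cV * norm v powr (2 * epsl)"
    unfolding a_def cV_def using assms by (intro norm_powr_le_emb_sup) auto
  also have "\<dots> \<le> cV * N" using nonneg by (intro mult_left_mono) (auto simp: N_def)
  moreover have "(1 + cV) * (N + D) = N + cV * N + D + cV * D" by (simp add: algebra_simps)
  moreover have "1 \<le> N" "0 \<le> cV * D" using nonneg by (auto simp: N_def)
  ultimately have "1 + a powr (2 * epsl) + D \<le> (1 + cV) * (N + D)" by linarith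
  then have "3 * (1 + c) * (1 + a powr (2 * epsl) + D) \<le> 3 * (1 + c) * ((1 + cV) * (N + D))"
    using nonneg by (intro mult_left_mono) auto
  with lip_factor have factor_le:
    "(1 + a powr epsl + b powr epsl)\<^sup>2 \<le> 3 * (1 + c) * ((1 + cV) * (N + D))"
    by (rule order_trans)
  have "(norm (iW (F v - F w)))\<^sup>2 \<le> cW * (norm (F v - F w))\<^sup>2"
    using norm_powr_le_emb_sup[OF assms(2), of 2 "F v - F w"] by (simp add: cW_def)
  also have "\<dots> \<le> cW * (eps\<^sup>2 * (1 + a powr epsl + b powr epsl)\<^sup>2 * d\<^sup>2)"
    using power_mono[OF assms(4), of 2] nonneg
    by (intro mult_left_mono) (auto simp: a_def b_def d_def power_mult_distrib)
  also have "\<dots> \<le> cW * (eps\<^sup>2 * (3 * (1 + c) * ((1 + cV) * (N + D))) * d\<^sup>2)"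
    using nonneg by (intro mult_left_mono mult_right_mono factor_le) auto
  also have "\<dots> = K * N * d\<^sup>2 + K * (d\<^sup>2 * D)"
    by (simp add: K_def cV_def cW_def c_def algebra_simps)
  also have "d\<^sup>2 * D = d powr (2 + 2 * epsl)"
    by (simp add: D_def powr_add d_def)
  finally show ?thesis by (simp add: N_def d_def)
qed

theorem lemma2p4:
  fixes iV :: "'v::real_normed_vector \<Rightarrow> 'vv::real_normed_vector"
    and iW :: "'w::real_normed_vector \<Rightarrow> 'ww::real_normed_vector"
    and F :: "'v \<Rightarrow> 'w"
    and eps theta epsl vtheta :: real
  assumes iV_lin: "bounded_linear iV" and iV_inj: "inj iV"
    and iW_lin: "bounded_linear iW" and iW_inj: "inj iW"
    and eps_nonneg: "eps \<ge> 0" and theta_nonneg: "theta \<ge> 0"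
    and epsl_pos: "epsl > 0" and vtheta_pos: "vtheta > 0"
    and F_lip: "\<And>v w. norm (F v - F w) \<le>
        eps * (1 + norm (iV v) powr epsl + norm (iV w) powr epsl) * norm (iV (v - w))"
    and vtheta_def: "vtheta = 2 * epsl"
    and theta_def: "theta = max
        (3 * eps\<^sup>2 * emb_sup iW 2 * (1 + emb_sup iV (2 * epsl)) * (1 + 2 powr (max (2 * epsl - 1) 0)))
        ((8 * eps\<^sup>2 + 2 * (norm (F 0))\<^sup>2) * max 1 (emb_sup iV (2 + 2 * epsl)))"
  shows "\<forall>v w. (norm (F v))\<^sup>2 \<le> theta * max 1 (norm v powr (2 + vtheta))
            \<and> (norm (iW (F v - F w)))\<^sup>2 \<le>
                theta * max 1 (norm v powr vtheta) * (norm (iV (v - w)))\<^sup>2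
                + theta * norm (iV (v - w)) powr (2 + vtheta)"
proof (intro allI conjI)
  fix v w
  have "norm (F v - F 0) \<le> eps * (1 + norm (iV v) powr epsl) * norm (iV v)"
    using F_lip[of v 0] epsl_pos by (simp add: linear_simps(3)[OF iV_lin])
  then have "(norm (F v))\<^sup>2 \<le> (8 * eps\<^sup>2 + 2 * (norm (F 0))\<^sup>2) * max 1 (emb_sup iV (2 + 2 * epsl))
      * max 1 (norm v powr (2 + 2 * epsl))"
    by (rule norm_square_le_of_local_lipschitz[OF iV_lin epsl_pos])
  also have "\<dots> \<le> theta * max 1 (norm v powr (2 + 2 * epsl))"
    using max.cobounded2 unfolding theta_def by (rule mult_right_mono) simp
  finally show "(norm (F v))\<^sup>2 \<le> theta * max 1 (norm v powr (2 + vtheta))"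
    by (simp add: vtheta_def)
next
  fix v w
  define K where "K = 3 * eps\<^sup>2 * emb_sup iW 2 * (1 + emb_sup iV (2 * epsl))
      * (1 + 2 powr (max (2 * epsl - 1) 0))"
  have "(norm (iW (F v - F w)))\<^sup>2 \<le> K * max 1 (norm v powr (2 * epsl)) * (norm (iV (v - w)))\<^sup>2
      + K * norm (iV (v - w)) powr (2 + 2 * epsl)"
    unfolding K_def by (rule norm_emb_diff_square_le_of_local_lipschitz[OF iV_lin iW_lin epsl_pos F_lip[of v w]])
  also have "\<dots> \<le> theta * max 1 (norm v powr (2 * epsl)) * (norm (iV (v - w)))\<^sup>2
      + theta * norm (iV (v - w)) powr (2 + 2 * epsl)"
  proof -
    have "K \<le> theta" unfolding theta_def K_def by (rule max.cobounded1)
    then show ?thesis by (intro add_mono mult_right_mono) simp_all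
  qed
  finally show "(norm (iW (F v - F w)))\<^sup>2 \<le>
      theta * max 1 (norm v powr vtheta) * (norm (iV (v - w)))\<^sup>2
      + theta * norm (iV (v - w)) powr (2 + vtheta)"
    by (simp add: vtheta_def)
qed

end
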